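(* Let $n\ge 1$. For each $1\le j\le n$, let $N^{(j)}$ be the smallest $k\ge 1$ such that $w_j$ and $w_{k+j}$ belong to the same class. Then $$\hat H_3=\frac1n\sum_{j=1}^n h_{N^{(j)}-1}$$ is an unbiased estimator of the Shannon entropy, i.e. $E(\hat H_3)=-\sum_{i=1}^M p_i\log(p_i)$.
   Context: Let $w_1,w_2,\dots$ be an infinite sequence of independent, identically distributed samples. Each sample belongs to exactly one of $M$ classes $C_1,\dots,C_M$, and $\Pr(w_k\in C_i)=p_i$, where $0<p_i\le 1$ and $\sum_{i=1}^M p_i=1$. The logarithm is the natural logarithm. The harmonic numbers are $h_n=\sum_{k=1}^n 1/k$ for $n\ge 1$, with $h_0=0$. *)

theory Defs
  imports "HOL-Probability.Probability"
begin

definition first_return :: "(nat \<Rightarrow> 'w \<Rightarrow> 'c) \<Rightarrow> nat \<Rightarrow> 'w \<Rightarrow> nat" where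
  "first_return X j \<omega> = (LEAST k. k \<ge> 1 \<and> X (k + j) \<omega> = X j \<omega>)"

end

theory Submission
  imports Defs
begin

(* Fix j \<ge> 1 and write N = first_return X j. The argument has three ingredients.
   (1) Tail sums: harm (N - 1) = (\<Sum>k<N. 1/k), the k = 0 term being 1/0 = 0, so by monotone
       convergence E[harm (N - 1)] = \<Sum>k. (1/k) * P(N > k) for any nat-valued N.
   (2) Tail probabilities: by independence, the probability that w_j lies in class i and the
       next K samples avoid class i is p_i (1 - p_i)^K; summing over i, the probability of no
       return within K steps is \<Sum>i. p_i (1 - p_i)^K. This tends to 0, so almost surely a
       return happens, and then N > K means exactly "no return within K steps".
   (3) The logarithmic series \<Sum>k\<ge>1. (1 - p)^k / k = - ln p.
   Together these give E[harm (N - 1)] = - \<Sum>i. p_i ln p_i for every j, and the theorem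
   follows by linearity of the integral. *)

(* The logarithmic series, written with index k \<ge> 0; its k = 0 term vanishes since 1/0 = 0. *)
lemma neg_ln_sums:
  fixes p :: real
  assumes "0 < p" "p \<le> 1"
  shows "(\<lambda>k. (1 - p) ^ k / real k) sums (- ln p)"
proof -
  have "(\<lambda>k. - ((- (p - 1)) ^ k) / real k) sums ln (1 + (p - 1))"
    using assms by (intro ln_series') auto
  then have "(\<lambda>k. - ((1 - p) ^ k / real k)) sums ln p" by simp
  then show ?thesis using sums_minus by fastforce
qed

lemma harm_pred_eq: "harm (m - 1) = (\<Sum>k<m. inverse (real k))"
proof (cases m)
  case (Suc m')
  have "(\<Sum>k<Suc m'. inverse (real k)) = (\<Sum>k<m'. inverse (real (Suc k)))"
    by (subst sum.lessThan_Suc_shift) simp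
  then show ?thesis using Suc by (simp add: harm_altdef)
qed (simp add: harm_altdef)

lemma nn_integral_sum_lessThan:
  fixes N :: "'a \<Rightarrow> nat" and f :: "nat \<Rightarrow> real"
  assumes [measurable]: "N \<in> measurable M (count_space UNIV)" and f: "\<And>k. 0 \<le> f k"
  shows "(\<integral>\<^sup>+\<omega>. ennreal (\<Sum>k<N \<omega>. f k) \<partial>M) =
         (\<Sum>k. ennreal (f k) * emeasure M {\<omega>\<in>space M. k < N \<omega>})"
proof -
  have [measurable]: "{\<omega>\<in>space M. k < N \<omega>} \<in> sets M" for k by measurable
  have "ennreal (\<Sum>k<N \<omega>. f k) = (\<Sum>k. ennreal (f k) * indicator {\<omega>\<in>space M. k < N \<omega>} \<omega>)"
    if "\<omega> \<in> space M" for \<omega>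
  proof -
    have "ennreal (\<Sum>k<N \<omega>. f k) = (\<Sum>k<N \<omega>. ennreal (f k))" using f by simp
    also have "\<dots> = (\<Sum>k. ennreal (f k) * indicator {\<omega>\<in>space M. k < N \<omega>} \<omega>)"
      using that by (subst suminf_finite[of "{..<N \<omega>}"]) (auto intro!: sum.cong)
    finally show ?thesis .
  qed
  then have "(\<integral>\<^sup>+\<omega>. ennreal (\<Sum>k<N \<omega>. f k) \<partial>M) =
      (\<integral>\<^sup>+\<omega>. (\<Sum>k. ennreal (f k) * indicator {\<omega>\<in>space M. k < N \<omega>} \<omega>) \<partial>M)"
    by (intro nn_integral_cong) simp
  also have "\<dots> = (\<Sum>k. ennreal (f k) * emeasure M {\<omega>\<in>space M. k < N \<omega>})"
    by (simp add: nn_integral_suminf nn_integral_cmult_indicator)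
  finally show ?thesis .
qed

lemma first_return_gt_iff:
  assumes "\<exists>k\<ge>1. X (k + j) \<omega> = X j \<omega>"
  shows "K < first_return X j \<omega> \<longleftrightarrow> (\<forall>l\<in>{1..K}. X (l + j) \<omega> \<noteq> X j \<omega>)"
proof -
  have returns: "1 \<le> first_return X j \<omega> \<and> X (first_return X j \<omega> + j) \<omega> = X j \<omega>"
    unfolding first_return_def using assms by (rule LeastI_ex)
  have minimal: "\<not> (1 \<le> l \<and> X (l + j) \<omega> = X j \<omega>)" if "l < first_return X j \<omega>" for l
    using that unfolding first_return_def by (rule not_less_Least)
  show ?thesis
  proof
    assume "K < first_return X j \<omega>"
    then show "\<forall>l\<in>{1..K}. X (l + j) \<omega> \<noteq> X j \<omega>" using minimal by auto
  next
    assume "\<forall>l\<in>{1..K}. X (l + j) \<omega> \<noteq> X j \<omega>"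
    then show "K < first_return X j \<omega>" using returns by (meson atLeastAtMost_iff not_less)
  qed
qed

locale iid_classes = prob_space P for P :: "'w measure" +
  fixes X :: "nat \<Rightarrow> 'w \<Rightarrow> nat" and p :: "nat \<Rightarrow> real" and M :: nat
  assumes indep: "indep_vars (\<lambda>_. count_space UNIV) X {1..}"
    and distr: "\<And>k i. k \<ge> 1 \<Longrightarrow> i \<in> {1..M} \<Longrightarrow> prob {\<omega> \<in> space P. X k \<omega> = i} = p i"
    and p_pos: "\<And>i. i \<in> {1..M} \<Longrightarrow> 0 < p i \<and> p i \<le> 1"
    and p_sum: "(\<Sum>i=1..M. p i) = 1"
begin

lemma X_measurable [measurable]: "k \<ge> 1 \<Longrightarrow> X k \<in> measurable P (count_space UNIV)"
  using indep unfolding indep_vars_def2 by auto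

lemma X_value_event: "k \<ge> 1 \<Longrightarrow> {\<omega> \<in> space P. X k \<omega> = i} \<in> events"
  by measurable

lemma same_class_event:
  assumes "a \<ge> 1" "b \<ge> 1" shows "{\<omega> \<in> space P. X a \<omega> = X b \<omega>} \<in> events"
proof -
  have "{\<omega> \<in> space P. X a \<omega> = X b \<omega>} =
      (\<Union>i. {\<omega> \<in> space P. X a \<omega> = i} \<inter> {\<omega> \<in> space P. X b \<omega> = i})"
    by auto
  then show ?thesis using assms X_value_event by (simp add: sets.countable_UN)
qed

lemma X_in_classes_AE: assumes "j \<ge> 1" shows "AE \<omega> in P. X j \<omega> \<in> {1..M}"
proof -
  have "prob {\<omega> \<in> space P. X j \<omega> \<in> {1..M}} = prob (\<Union>i\<in>{1..M}. {\<omega> \<in> space P. X j \<omega> = i})"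
    by (rule arg_cong[where f = prob]) auto
  also have "\<dots> = (\<Sum>i\<in>{1..M}. prob {\<omega> \<in> space P. X j \<omega> = i})"
    using assms by (intro finite_measure_finite_Union) (auto simp: disjoint_family_on_def)
  also have "\<dots> = 1" using distr assms p_sum by simp
  finally show ?thesis using AE_prob_1 by force
qed

lemma prob_class_no_return:
  assumes j: "j \<ge> 1" and i: "i \<in> {1..M}"
  shows "prob {\<omega> \<in> space P. X j \<omega> = i \<and> (\<forall>l\<in>{1..K}. X (l + j) \<omega> \<noteq> i)} = p i * (1 - p i) ^ K"
proof -
  define A where "A m = X m -` (if m = j then {i} else - {i}) \<inter> space P" for m
  have "{j..j + K} = insert j ((\<lambda>l. l + j) ` {1..K})"
    by (simp add: Icc_eq_insert_lb_nat add.commute)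
  then have "(\<Inter>m\<in>{j..j+K}. A m) = A j \<inter> (\<Inter>l\<in>{1..K}. A (l + j))"
    by (simp only: INF_insert image_image)
  also have "\<dots> = {\<omega> \<in> space P. X j \<omega> = i \<and> (\<forall>l\<in>{1..K}. X (l + j) \<omega> \<noteq> i)}"
    unfolding A_def by auto
  finally have event: "{\<omega> \<in> space P. X j \<omega> = i \<and> (\<forall>l\<in>{1..K}. X (l + j) \<omega> \<noteq> i)} = (\<Inter>m\<in>{j..j+K}. A m)" ..
  have "prob (\<Inter>m\<in>{j..j+K}. A m) = (\<Prod>m\<in>{j..j+K}. prob (A m))"
    using j indep unfolding indep_vars_def2 A_def by (intro indep_setsD) auto
  also have "\<dots> = prob (A j) * (\<Prod>m\<in>{Suc j..j+K}. prob (A m))"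
    by (simp add: prod.atLeast_Suc_atMost)
  also have "prob (A j) = p i"
    using distr[OF j i] unfolding A_def by (simp add: vimage_def Int_def conj_commute)
  also have "(\<Prod>m\<in>{Suc j..j+K}. prob (A m)) = (\<Prod>m\<in>{Suc j..j+K}. 1 - p i)"
  proof (rule prod.cong)
    fix m assume "m \<in> {Suc j..j+K}"
    then have m: "m \<ge> 1" "m \<noteq> j" using j by auto
    then have "A m = space P - {\<omega> \<in> space P. X m \<omega> = i}" unfolding A_def by auto
    then show "prob (A m) = 1 - p i"
      using prob_compl[OF X_value_event[OF m(1)]] distr[OF m(1) i] by simp
  qed simp
  finally show ?thesis using event by simp
qed

definition no_return :: "nat \<Rightarrow> nat \<Rightarrow> 'w set" where
  "no_return j K = {\<omega> \<in> space P. \<forall>l\<in>{1..K}. X (l + j) \<omega> \<noteq> X j \<omega>}"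

lemma no_return_event:
  assumes j: "j \<ge> 1" shows "no_return j K \<in> events"
proof -
  have "no_return j K = space P - (\<Union>l\<in>{1..K}. {\<omega> \<in> space P. X (l + j) \<omega> = X j \<omega>})"
    unfolding no_return_def by auto
  then show ?thesis using same_class_event j by (simp add: sets.Diff sets.finite_UN)
qed

(* Summing over the class of w_j; the labels outside 1..M form a null set. *)
lemma prob_no_return:
  assumes j: "j \<ge> 1" shows "prob (no_return j K) = (\<Sum>i=1..M. p i * (1 - p i) ^ K)"
proof -
  let ?E = "\<lambda>i. {\<omega> \<in> space P. X j \<omega> = i \<and> (\<forall>l\<in>{1..K}. X (l + j) \<omega> \<noteq> i)}"
  have E_event: "?E i \<in> events" for i
  proof -
    have "?E i = no_return j K \<inter> {\<omega> \<in> space P. X j \<omega> = i}" unfolding no_return_def by auto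
    then show ?thesis using no_return_event X_value_event j by simp
  qed
  have "AE \<omega> in P. \<omega> \<in> no_return j K \<longleftrightarrow> \<omega> \<in> (\<Union>i\<in>{1..M}. ?E i)"
    using X_in_classes_AE[OF j] by eventually_elim (auto simp: no_return_def)
  then have "prob (no_return j K) = prob (\<Union>i\<in>{1..M}. ?E i)"
    using no_return_event[OF j] E_event by (intro measure_eq_AE) auto
  also have "\<dots> = (\<Sum>i\<in>{1..M}. prob (?E i))"
    using E_event by (intro finite_measure_finite_Union) (auto simp: disjoint_family_on_def)
  also have "\<dots> = (\<Sum>i=1..M. p i * (1 - p i) ^ K)"
    using prob_class_no_return[OF j] by simp
  finally show ?thesis .
qed

(* Almost surely the class of w_j recurs, since P(no_return j K) tends to 0. *)
lemma never_return_null: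
  assumes j: "j \<ge> 1" shows "(\<Inter>K. no_return j K) \<in> null_sets P"
proof -
  have "(\<lambda>K. \<Sum>i=1..M. p i * (1 - p i) ^ K) \<longlonglongrightarrow> 0"
  proof (rule tendsto_null_sum)
    fix i assume "i \<in> {1..M}"
    then have "norm (1 - p i) < 1" using p_pos by auto
    then show "(\<lambda>K. p i * (1 - p i) ^ K) \<longlonglongrightarrow> 0"
      by (intro tendsto_mult_right_zero LIMSEQ_power_zero)
  qed
  moreover have "prob (\<Inter>K. no_return j K) \<le> (\<Sum>i=1..M. p i * (1 - p i) ^ K)" for K
    using no_return_event[OF j] finite_measure_mono[of "\<Inter>K. no_return j K" "no_return j K"]
    by (auto simp: prob_no_return[OF j])
  ultimately have "prob (\<Inter>K. no_return j K) \<le> 0" by (intro LIMSEQ_le_const) auto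
  moreover have "(\<Inter>K. no_return j K) \<in> events" using no_return_event[OF j] by auto
  ultimately show ?thesis by (simp add: measure_le_0_iff null_setsI emeasure_eq_measure)
qed

lemma first_return_measurable:
  assumes j: "j \<ge> 1" shows "first_return X j \<in> measurable P (count_space UNIV)"
  unfolding first_return_def
proof (rule measurable_Least)
  fix k
  have "{\<omega> \<in> space P. 1 \<le> k \<and> X (k + j) \<omega> = X j \<omega>} \<in> events"
  proof (cases "k \<ge> 1")
    case True
    then show ?thesis using same_class_event[of "k + j" j] j by simp
  qed simp
  then show "(\<lambda>\<omega>. 1 \<le> k \<and> X (k + j) \<omega> = X j \<omega>) \<in> measurable P (count_space UNIV)"
    by (simp only: pred_def)
qed

lemma emeasure_first_return_gt:
  assumes j: "j \<ge> 1"
  shows "emeasure P {\<omega> \<in> space P. K < first_return X j \<omega>} = ennreal (\<Sum>i=1..M. p i * (1 - p i) ^ K)"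
proof -
  have "AE \<omega> in P. \<omega> \<notin> (\<Inter>K. no_return j K)" by (rule AE_not_in[OF never_return_null[OF j]])
  then have same_AE:
    "AE \<omega> in P. \<omega> \<in> {\<omega> \<in> space P. K < first_return X j \<omega>} \<longleftrightarrow> \<omega> \<in> no_return j K"
  proof eventually_elim
    case (elim \<omega>)
    show ?case
    proof (cases "\<omega> \<in> space P")
      case True
      then have "\<exists>k\<ge>1. X (k + j) \<omega> = X j \<omega>" using elim by (auto simp: no_return_def)
      then show ?thesis using True by (simp add: no_return_def first_return_gt_iff)
    qed (simp add: no_return_def)
  qed
  have gt_event: "{\<omega> \<in> space P. K < first_return X j \<omega>} \<in> events"
    using measurable_sets[OF first_return_measurable[OF j], of "{K<..}"]
    by (simp add: vimage_def Int_def conj_commute)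
  have "emeasure P {\<omega> \<in> space P. K < first_return X j \<omega>} = emeasure P (no_return j K)"
    by (rule emeasure_eq_AE[OF same_AE gt_event no_return_event[OF j]])
  also have "\<dots> = ennreal (prob (no_return j K))" by (rule emeasure_eq_measure)
  finally show ?thesis by (simp only: prob_no_return[OF j])
qed

lemma has_integral_harm_first_return:
  assumes j: "j \<ge> 1"
  shows "has_bochner_integral P (\<lambda>\<omega>. harm (first_return X j \<omega> - 1)) (- (\<Sum>i=1..M. p i * ln (p i)))"
proof -
  define tail where "tail k = (\<Sum>i=1..M. p i * (1 - p i) ^ k)" for k
  have tail_nonneg: "0 \<le> inverse (real k) * tail k" for k
    unfolding tail_def using p_pos by (intro mult_nonneg_nonneg sum_nonneg) (simp_all add: less_imp_le)
  have "(\<lambda>k. p i * ((1 - p i) ^ k / real k)) sums (p i * - ln (p i))" if "i \<in> {1..M}" for i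
    by (rule sums_mult[OF neg_ln_sums]) (use p_pos[OF that] in auto)
  then have "(\<lambda>k. \<Sum>i=1..M. p i * ((1 - p i) ^ k / real k)) sums (\<Sum>i=1..M. p i * - ln (p i))"
    by (rule sums_sum)
  then have series: "(\<lambda>k. inverse (real k) * tail k) sums (- (\<Sum>i=1..M. p i * ln (p i)))"
    unfolding tail_def by (simp add: sum_distrib_left sum_negf divide_inverse ac_simps)
  have entropy_nonneg: "0 \<le> - (\<Sum>i=1..M. p i * ln (p i))"
    by (rule sums_le[OF tail_nonneg sums_zero series])
  have "(\<integral>\<^sup>+\<omega>. ennreal (harm (first_return X j \<omega> - 1)) \<partial>P) =
      (\<integral>\<^sup>+\<omega>. ennreal (\<Sum>k<first_return X j \<omega>. inverse (real k)) \<partial>P)"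
    by (simp only: harm_pred_eq)
  also have "\<dots> = (\<Sum>k. ennreal (inverse (real k)) * emeasure P {\<omega> \<in> space P. k < first_return X j \<omega>})"
    by (rule nn_integral_sum_lessThan[OF first_return_measurable[OF j]]) simp
  also have "\<dots> = (\<Sum>k. ennreal (inverse (real k) * tail k))"
    unfolding emeasure_first_return_gt[OF j] tail_def
    using p_pos by (intro suminf_cong ennreal_mult'[symmetric] sum_nonneg) (simp_all add: less_imp_le)
  also have "\<dots> = ennreal (- (\<Sum>i=1..M. p i * ln (p i)))"
    using series tail_nonneg entropy_nonneg by (intro sums_unique[symmetric]) (simp add: sums_ennreal)
  finally have nn_integral: "(\<integral>\<^sup>+\<omega>. ennreal (harm (first_return X j \<omega> - 1)) \<partial>P) =
      ennreal (- (\<Sum>i=1..M. p i * ln (p i)))" .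
  have "(\<lambda>\<omega>. harm (first_return X j \<omega> - 1) :: real) \<in> borel_measurable P"
    using measurable_compose[OF first_return_measurable[OF j], of "\<lambda>m. harm (m - 1) :: real" borel]
    by simp
  then show ?thesis
    using nn_integral entropy_nonneg by (intro has_bochner_integral_nn_integral) (auto simp: harm_nonneg)
qed

end

theorem mainTheorem3:
  fixes P :: "'w measure" and X :: "nat \<Rightarrow> 'w \<Rightarrow> nat"
    and p :: "nat \<Rightarrow> real" and M n :: nat
  assumes "prob_space P"
    and "prob_space.indep_vars P (\<lambda>_. count_space UNIV) X {1..}"
    and "\<And>k i. k \<ge> 1 \<Longrightarrow> i \<in> {1..M} \<Longrightarrow>
           measure P {\<omega> \<in> space P. X k \<omega> = i} = p i"
    and "\<And>i. i \<in> {1..M} \<Longrightarrow> 0 < p i \<and> p i \<le> 1"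
    and "(\<Sum>i=1..M. p i) = 1"
    and "n \<ge> 1"
  shows "(\<integral>\<omega>. (1 / real n) * (\<Sum>j=1..n. harm (first_return X j \<omega> - 1)) \<partial>P)
         = - (\<Sum>i=1..M. p i * ln (p i))"
proof -
  interpret iid_classes P X p M
    using assms(1-5) unfolding iid_classes_def iid_classes_axioms_def by blast
  let ?H = "- (\<Sum>i=1..M. p i * ln (p i))"
  have "has_bochner_integral P (\<lambda>\<omega>. \<Sum>j=1..n. harm (first_return X j \<omega> - 1)) (\<Sum>j=1..n. ?H)"
    by (intro has_bochner_integral_sum has_integral_harm_first_return) auto
  then have "has_bochner_integral P (\<lambda>\<omega>. (1 / real n) * (\<Sum>j=1..n. harm (first_return X j \<omega> - 1)))
      ((1 / real n) * (\<Sum>j=1..n. ?H))"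
    by (rule has_bochner_integral_mult_right)
  then have "(\<integral>\<omega>. (1 / real n) * (\<Sum>j=1..n. harm (first_return X j \<omega> - 1)) \<partial>P) =
      (1 / real n) * (real n * ?H)"
    by (simp only: has_bochner_integral_integral_eq sum_constant card_atLeastAtMost diff_Suc_1)
  then show ?thesis using assms(6) by simp
qed

end
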